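(* Let $\mathbf x,\mathbf y$ be the Heegaard states corresponding to lifted partial permutations $(\tilde S,\tilde f)$ and $(\tilde T,\tilde g)$. There exists a compactly supported $\phi\in D(\mathbf x,\mathbf y)$ if and only if $\tilde S=\tilde T$ and $\tilde f(\tilde S)=\tilde g(\tilde T)$. Moreover, if such $\phi$ exists, it is unique.
   Context: Fix integers $0<k<m$. $G_m$ is the group of isometries of $\mathbb R$ generated by $x\mapsto 1-x$ and $x\mapsto 2m-1-x$; $Q_1:\mathbb Z\to\mathbb Z/G_m\cong\{1,\dots,m-1\}$. A lifted partial permutation on $k$ letters is a pair $(\tilde S,\tilde f)$ with $\tilde S\subset\mathbb Z$ $G_m$-invariant, $|\tilde S/G_m|=k$, $\tilde f:\tilde S\to\mathbb Z$ $G_m$-equivariant with injective induced map $\tilde S/G_m\to\mathbb Z/G_m$. In $\mathbb R^2$ take vertical lines $\tilde\alpha_i=\{i\}\times\mathbb R$, horizontal lines $\tilde\beta_i=\mathbb R\times\{i\}$; $\mathbb G_m$ is generated by the $180^\circ$ rotations about $(\frac12,\frac12)$ and $(m-\frac12,m-\frac12)$; $\mathcal H=\mathbb R^2/\mathbb G_m$, with $\alpha_i,\beta_i$ ($1\le i\le m-1$) the images of $\tilde\alpha_j,\tilde\beta_j$ with $Q_1(j)=i$. A $k$-fold Heegaard state is a set of $k$ points each on some $\alpha_i\cap\beta_j$ with distinct $\alpha$'s and distinct $\beta$'s; $(\tilde S,\tilde f)$ corresponds to the image of its graph $\{(i,\tilde f(i))\}$. A two-chain is an assignment of integers to components of $\mathcal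 H\setminus(\boldsymbol\alpha\cup\boldsymbol\beta)$. At an intersection point of $\alpha_i$ and $\beta_j$ with local multiplicities $A,B,C,D$ in the four quadrants (with $A,D$ opposite and $B,C$ opposite, oriented as in the standard convention), the point is an initial corner if $B+C=A+D+1$, a terminal corner if $B+C=A+D-1$, and not a corner if $A+D=B+C$. $D(\mathbf x,\mathbf y)$ is the set of two-chains whose initial corners are exactly the points of $\mathbf x\setminus\mathbf y$ and terminal corners exactly the points of $\mathbf y\setminus\mathbf x$ (with no other corners). *)

theory Defs
  imports Main Complex_Main
begin

definition refl1 :: "int \<Rightarrow> int" where "refl1 x = 1 - x"
definition refl2 :: "nat \<Rightarrow> int \<Rightarrow> int" where "refl2 m x = 2 * int m - 1 - x"

text \<open>G_m = group generated by the two reflections (both are involutions, so the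
  monoid generated under composition is the group).\<close>
inductive_set Gm :: "nat \<Rightarrow> (int \<Rightarrow> int) set" for m where
  Gm_id: "id \<in> Gm m"
| Gm_r1: "g \<in> Gm m \<Longrightarrow> refl1 \<circ> g \<in> Gm m"
| Gm_r2: "g \<in> Gm m \<Longrightarrow> refl2 m \<circ> g \<in> Gm m"

definition orbitZ :: "nat \<Rightarrow> int \<Rightarrow> int set" where
  "orbitZ m i = {g i | g. g \<in> Gm m}"

text \<open>Lifted partial permutation on k letters. The map f is only relevant on S.\<close>
definition lifted_pp :: "nat \<Rightarrow> nat \<Rightarrow> int set \<Rightarrow> (int \<Rightarrow> int) \<Rightarrow> bool" where
  "lifted_pp m k S f \<longleftrightarrow>
     (\<forall>g\<in>Gm m. \<forall>s\<in>S. g s \<in> S) \<and>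
     card (orbitZ m ` S) = k \<and> finite (orbitZ m ` S) \<and>
     (\<forall>g\<in>Gm m. \<forall>s\<in>S. f (g s) = g (f s)) \<and>
     (\<forall>s\<in>S. \<forall>t\<in>S. orbitZ m (f s) = orbitZ m (f t) \<longrightarrow> orbitZ m s = orbitZ m t)"

definition rot1 :: "real \<times> real \<Rightarrow> real \<times> real" where
  "rot1 p = (1 - fst p, 1 - snd p)"
definition rot2 :: "nat \<Rightarrow> real \<times> real \<Rightarrow> real \<times> real" where
  "rot2 m p = (2 * real m - 1 - fst p, 2 * real m - 1 - snd p)"

inductive_set PG :: "nat \<Rightarrow> (real \<times> real \<Rightarrow> real \<times> real) set" for m where
  PG_id: "id \<in> PG m"
| PG_r1: "g \<in> PG m \<Longrightarrow> rot1 \<circ> g \<in> PG m"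
| PG_r2: "g \<in> PG m \<Longrightarrow> rot2 m \<circ> g \<in> PG m"

text \<open>Points of H are PG-orbits of points of R^2.\<close>
definition orbitP :: "nat \<Rightarrow> real \<times> real \<Rightarrow> (real \<times> real) set" where
  "orbitP m p = {g p | g. g \<in> PG m}"

definition lattice :: "int \<Rightarrow> int \<Rightarrow> real \<times> real" where
  "lattice a b = (real_of_int a, real_of_int b)"

text \<open>Open unit square with lower-left corner (i,j); the components of
  R^2 minus the lines are exactly these squares.\<close>
definition Sq :: "int \<Rightarrow> int \<Rightarrow> (real \<times> real) set" where
  "Sq i j = {p. real_of_int i < fst p \<and> fst p < real_of_int i + 1 \<and>
                real_of_int j < snd p \<and> snd p < real_of_int j + 1}"

text \<open>Component of H minus (alpha \<union> beta), represented by its preimage in R^2.\<close>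
definition region :: "nat \<Rightarrow> int \<Rightarrow> int \<Rightarrow> (real \<times> real) set" where
  "region m i j = (\<Union>g\<in>PG m. g ` Sq i j)"

definition regions :: "nat \<Rightarrow> (real \<times> real) set set" where
  "regions m = {region m i j | i j. True}"

definition two_chain :: "nat \<Rightarrow> ((real \<times> real) set \<Rightarrow> int) \<Rightarrow> bool" where
  "two_chain m \<phi> \<longleftrightarrow> (\<forall>R. R \<notin> regions m \<longrightarrow> \<phi> R = 0)"

definition compact_supp :: "nat \<Rightarrow> ((real \<times> real) set \<Rightarrow> int) \<Rightarrow> bool" where
  "compact_supp m \<phi> \<longleftrightarrow> finite {R \<in> regions m. \<phi> R \<noteq> 0}"

definition hstate :: "nat \<Rightarrow> int set \<Rightarrow> (int \<Rightarrow> int) \<Rightarrow> (real \<times> real) set set" where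
  "hstate m S f = {orbitP m (lattice i (f i)) | i. i \<in> S}"

text \<open>Local multiplicities at the lattice point (a,b): A = NE, D = SW (opposite),
  B = NW, C = SE (opposite).\<close>
definition multA :: "nat \<Rightarrow> ((real \<times> real) set \<Rightarrow> int) \<Rightarrow> int \<Rightarrow> int \<Rightarrow> int" where
  "multA m \<phi> a b = \<phi> (region m a b)"
definition multB :: "nat \<Rightarrow> ((real \<times> real) set \<Rightarrow> int) \<Rightarrow> int \<Rightarrow> int \<Rightarrow> int" where
  "multB m \<phi> a b = \<phi> (region m (a - 1) b)"
definition multC :: "nat \<Rightarrow> ((real \<times> real) set \<Rightarrow> int) \<Rightarrow> int \<Rightarrow> int \<Rightarrow> int" where
  "multC m \<phi> a b = \<phi> (region m a (b - 1))"
definition multD :: "nat \<Rightarrow> ((real \<times> real) set \<Rightarrow> int) \<Rightarrow> int \<Rightarrow> int \<Rightarrow> int" where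
  "multD m \<phi> a b = \<phi> (region m (a - 1) (b - 1))"

definition initial_corner where
  "initial_corner m \<phi> a b \<longleftrightarrow>
     multB m \<phi> a b + multC m \<phi> a b = multA m \<phi> a b + multD m \<phi> a b + 1"
definition terminal_corner where
  "terminal_corner m \<phi> a b \<longleftrightarrow>
     multB m \<phi> a b + multC m \<phi> a b = multA m \<phi> a b + multD m \<phi> a b - 1"
definition no_corner where
  "no_corner m \<phi> a b \<longleftrightarrow>
     multB m \<phi> a b + multC m \<phi> a b = multA m \<phi> a b + multD m \<phi> a b"

text \<open>D(x,y). Every alpha/beta intersection point of H is the image of a lattice point.\<close>
definition Dom :: "nat \<Rightarrow> (real \<times> real) set set \<Rightarrow> (real \<times> real) set set
                   \<Rightarrow> ((real \<times> real) set \<Rightarrow> int) set" where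
  "Dom m x y = {\<phi>. two_chain m \<phi> \<and>
     (\<forall>a b. let P = orbitP m (lattice a b) in
        (P \<in> x - y \<longrightarrow> initial_corner m \<phi> a b) \<and>
        (P \<in> y - x \<longrightarrow> terminal_corner m \<phi> a b) \<and>
        (P \<notin> x - y \<and> P \<notin> y - x \<longrightarrow> no_corner m \<phi> a b))}"

end

(*
  Both groups are infinite dihedral groups: G_m consists of the translations x \<mapsto> x + t (2m - 2)
  and the reflections x \<mapsto> 1 + t (2m - 2) - x, and the plane group acts by the same maps on both
  coordinates. So a component of H is the orbit of a unit cell (i, j), |i - j| is constant on it, and
  a two-chain is a function p on cells. The corner conditions defining D(x, y) say exactly that the
  mixed difference p (a - 1) b + p a (b - 1) - p a b - p (a - 1) (b - 1) is the indicator of the graph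
  of f minus that of g. Compact support means that p vanishes off a band around the diagonal, and
  summing the corner equations along a row or a column then forces S = T and f S = g T; applied to
  the difference of two solutions it gives uniqueness. Conversely, if S = T and f S = g S, the number
  of graph points of f north-west of a cell minus that of g is a solution: it is invariant under
  translations, vanishes off a band, and is invariant under reflections, which exchange north-west and
  south-east counts, because for bijections with equal images both counts have the same difference.
*)

theory Submission
  imports Defs
begin

section \<open>The infinite dihedral groups\<close>

definition period :: "nat \<Rightarrow> int" where "period m = 2 * int m - 2"

text \<open>The maps are defined over an arbitrary ring, so that the same translations and reflections
  describe \<open>G_m\<close> on \<open>\<int>\<close> and, coordinatewise, the plane group on \<open>\<real> \<times> \<real>\<close>.\<close>

definition shift :: "nat \<Rightarrow> int \<Rightarrow> 'a::ring_1 \<Rightarrow> 'a" where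
  "shift m t x = x + of_int (t * period m)"

definition flip :: "nat \<Rightarrow> int \<Rightarrow> 'a::ring_1 \<Rightarrow> 'a" where
  "flip m t x = of_int (1 + t * period m) - x"

definition dihedral_maps :: "nat \<Rightarrow> ('a::ring_1 \<Rightarrow> 'a) set" where
  "dihedral_maps m = range (shift m) \<union> range (flip m)"

lemma shift_0: "shift m 0 = id"
  by (simp add: fun_eq_iff shift_def)

lemma flip_comp_shift: "flip m s \<circ> shift m t = flip m (s - t)"
  by (simp add: fun_eq_iff shift_def flip_def algebra_simps)

lemma flip_comp_flip: "flip m s \<circ> flip m t = shift m (s - t)"
  by (simp add: fun_eq_iff shift_def flip_def algebra_simps)

lemma of_int_shift: "shift m t (of_int x) = of_int (shift m t x)"
  by (simp add: shift_def)

lemma of_int_flip: "flip m t (of_int x) = of_int (flip m t x)"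
  by (simp add: flip_def)

lemma refl1_eq_flip: "refl1 = flip m 0"
  by (simp add: fun_eq_iff refl1_def flip_def)

lemma refl2_eq_flip: "refl2 m = flip m 1"
  by (simp add: fun_eq_iff refl2_def flip_def period_def)

lemma rot1_eq_flip: "rot1 = map_prod (flip m 0) (flip m 0)"
  by (simp add: fun_eq_iff rot1_def flip_def)

lemma rot2_eq_flip: "rot2 m = map_prod (flip m 1) (flip m 1)"
  by (simp add: fun_eq_iff rot2_def flip_def period_def)

lemma flip_comp_dihedral_maps:
  "h \<in> dihedral_maps m \<Longrightarrow> flip m s \<circ> h \<in> dihedral_maps m"
  by (auto simp: dihedral_maps_def flip_comp_shift flip_comp_flip)

lemma shift_in_generated:
  assumes "id \<in> G"
    and "\<And>g. g \<in> G \<Longrightarrow> flip m 0 \<circ> g \<in> G" and "\<And>g. g \<in> G \<Longrightarrow> flip m 1 \<circ> g \<in> G"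
  shows "shift m t \<in> G"
proof (induction t rule: int_induct[where k = 0])
  case base
  then show ?case using assms(1) by (simp only: shift_0)
next
  case (step1 t)
  have "flip m 1 \<circ> (flip m 0 \<circ> shift m t) = shift m (t + 1)"
    by (simp add: flip_comp_shift flip_comp_flip add.commute)
  then show ?case using assms(2,3) step1(2) by (metis add.commute)
next
  case (step2 t)
  have "flip m 0 \<circ> (flip m 1 \<circ> shift m t) = shift m (t - 1)"
    by (simp add: flip_comp_shift flip_comp_flip)
  then show ?case using assms(2,3) step2(2) by metis
qed

lemma Gm_eq_dihedral_maps: "Gm m = dihedral_maps m"
proof
  show "Gm m \<subseteq> dihedral_maps m"
  proof
    fix g assume "g \<in> Gm m"
    then show "g \<in> dihedral_maps m"
    proof induction
      case Gm_id
      show ?case unfolding dihedral_maps_def shift_0[of m, symmetric] by blast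
    qed (simp_all only: refl1_eq_flip[of m] refl2_eq_flip flip_comp_dihedral_maps)
  qed
  have shift_in: "shift m t \<in> Gm m" for t
    by (rule shift_in_generated) (auto intro: Gm.intros simp: refl1_eq_flip[symmetric] refl2_eq_flip[symmetric])
  have "flip m t = refl1 \<circ> shift m (- t)" for t
    by (simp add: refl1_eq_flip[of m] flip_comp_shift)
  then have "flip m t \<in> Gm m" for t
    using Gm_r1[OF shift_in] by metis
  then show "dihedral_maps m \<subseteq> Gm m"
    using shift_in by (auto simp: dihedral_maps_def)
qed

lemma PG_subset_dihedral_maps: "PG m \<subseteq> (\<lambda>h. map_prod h h) ` dihedral_maps m"
proof
  fix g assume "g \<in> PG m"
  then show "g \<in> (\<lambda>h. map_prod h h) ` dihedral_maps m"
  proof induction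
    case PG_id
    have "id = map_prod (shift m 0) (shift m 0 :: real \<Rightarrow> real)"
      by (simp only: shift_0 map_prod.id)
    then show ?case unfolding dihedral_maps_def by blast
  next
    case (PG_r1 g)
    then obtain h where "h \<in> dihedral_maps m" "g = map_prod h h" by blast
    then have "map_prod (flip m 0) (flip m 0) \<circ> g = map_prod (flip m 0 \<circ> h) (flip m 0 \<circ> h)"
      by (simp add: map_prod.comp)
    then show ?case
      unfolding rot1_eq_flip[of m] using flip_comp_dihedral_maps[OF \<open>h \<in> dihedral_maps m\<close>] by blast
  next
    case (PG_r2 g)
    then obtain h where "h \<in> dihedral_maps m" "g = map_prod h h" by blast
    then have "map_prod (flip m 1) (flip m 1) \<circ> g = map_prod (flip m 1 \<circ> h) (flip m 1 \<circ> h)"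
      by (simp add: map_prod.comp)
    then show ?case
      unfolding rot2_eq_flip using flip_comp_dihedral_maps[OF \<open>h \<in> dihedral_maps m\<close>] by blast
  qed
qed

lemma map_prod_shift_in_PG: "map_prod (shift m t) (shift m t) \<in> PG m"
proof (rule shift_in_generated[where G = "{h. map_prod h h \<in> PG m}", simplified])
  show "map_prod id id \<in> PG m" by (simp add: map_prod.id PG_id)
qed (auto simp: map_prod.comp[symmetric] rot1_eq_flip[symmetric] rot2_eq_flip[symmetric] intro: PG.intros)

lemma PG_comp: "g \<in> PG m \<Longrightarrow> h \<in> PG m \<Longrightarrow> g \<circ> h \<in> PG m"
  by (induction rule: PG.induct) (auto simp: comp_assoc intro: PG.intros)

section \<open>Components of the Heegaard diagram\<close>

lemma Sq_center_iff: "(of_int a + 1/2, of_int b + 1/2) \<in> Sq i j \<longleftrightarrow> a = i \<and> b = j"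
proof -
  have "of_int i < (of_int a + 1/2 :: real) \<and> of_int a + 1/2 < (of_int i + 1 :: real) \<longleftrightarrow> a = i"
    for a i :: int
  proof
    assume "of_int i < (of_int a + 1/2 :: real) \<and> of_int a + 1/2 < (of_int i + 1 :: real)"
    then have "i < a + 1" "a < i + 1" by linarith+
    then show "a = i" by simp
  qed simp
  then show ?thesis by (auto simp: Sq_def)
qed

lemma surj_map_prod_shift: "surj (map_prod (shift m t) (shift m t :: 'a::ring_1 \<Rightarrow> 'a))"
  by (rule surjI[of _ "map_prod (shift m (- t)) (shift m (- t))"]) (simp add: shift_def map_prod_def split_beta)

lemma surj_map_prod_flip: "surj (map_prod (flip m t) (flip m t :: 'a::ring_1 \<Rightarrow> 'a))"
  by (rule surjI[of _ "map_prod (flip m t) (flip m t)"]) (simp add: flip_def map_prod_def split_beta)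

lemma map_prod_shift_Sq:
  "map_prod (shift m t) (shift m t) ` Sq i j = Sq (i + t * period m) (j + t * period m)"
proof -
  have "map_prod (shift m t) (shift m t) -` Sq (i + t * period m) (j + t * period m) = Sq i j"
    by (auto simp: Sq_def shift_def)
  then show ?thesis by (metis surj_map_prod_shift surj_image_vimage_eq)
qed

lemma map_prod_flip_Sq:
  "map_prod (flip m t) (flip m t) ` Sq i j = Sq (t * period m - i) (t * period m - j)"
proof -
  have "map_prod (flip m t) (flip m t) -` Sq (t * period m - i) (t * period m - j) = Sq i j"
    by (auto simp: Sq_def flip_def)
  then show ?thesis by (metis surj_map_prod_flip surj_image_vimage_eq)
qed

lemma region_eq_imp_cells_related:
  assumes "region m i j = region m i' j'"
  shows "(\<exists>t. i' = i + t * period m \<and> j' = j + t * period m) \<or>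
         (\<exists>t. i' = t * period m - i \<and> j' = t * period m - j)"
proof -
  let ?c = "(of_int i' + 1/2, of_int j' + 1/2) :: real \<times> real"
  have "?c \<in> Sq i' j'"
    by (rule Sq_center_iff[THEN iffD2]) simp
  then have "?c \<in> region m i' j'"
    unfolding region_def using PG_id[of m] by (intro UN_I[of id]) simp_all
  then have "?c \<in> region m i j"
    using assms by simp
  then obtain g where g: "g \<in> PG m" "?c \<in> g ` Sq i j"
    unfolding region_def by blast
  obtain h :: "real \<Rightarrow> real" where "h \<in> dihedral_maps m" "g = map_prod h h"
    using subsetD[OF PG_subset_dihedral_maps g(1)] by blast
  with g(2) have h: "h \<in> dihedral_maps m" "?c \<in> map_prod h h ` Sq i j"
    by simp_all
  from h(1) consider t where "h = shift m t" | t where "h = flip m t"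
    unfolding dihedral_maps_def by blast
  then show ?thesis
  proof cases
    case 1
    with h(2) have "?c \<in> Sq (i + t * period m) (j + t * period m)"
      by (simp add: map_prod_shift_Sq)
    then show ?thesis
      unfolding Sq_center_iff by blast
  next
    case 2
    with h(2) have "?c \<in> Sq (t * period m - i) (t * period m - j)"
      by (simp add: map_prod_flip_Sq)
    then show ?thesis
      unfolding Sq_center_iff by blast
  qed
qed

lemma region_shift: "region m (i + t * period m) (j + t * period m) = region m i j"
proof -
  have le: "region m (i + t * period m) (j + t * period m) \<subseteq> region m i j" for i j t
  proof
    fix p assume "p \<in> region m (i + t * period m) (j + t * period m)"
    then obtain g where g: "g \<in> PG m" "p \<in> g ` Sq (i + t * period m) (j + t * period m)"
      unfolding region_def by blast
    then have "p \<in> (g \<circ> map_prod (shift m t) (shift m t)) ` Sq i j"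
      by (simp only: map_prod_shift_Sq[symmetric] image_comp)
    moreover have "g \<circ> map_prod (shift m t) (shift m t) \<in> PG m"
      using g(1) map_prod_shift_in_PG by (rule PG_comp)
    ultimately show "p \<in> region m i j"
      unfolding region_def by (rule UN_I[rotated])
  qed
  show ?thesis
    using le le[of "i + t * period m" "- t" "j + t * period m"] by (simp add: subset_antisym)
qed

lemma region_eq_imp_abs_diff_eq: "region m i j = region m i' j' \<Longrightarrow> \<bar>i - j\<bar> = \<bar>i' - j'\<bar>"
  by (drule region_eq_imp_cells_related) auto

lemma compact_supp_imp_band:
  assumes "compact_supp m \<phi>"
  obtains L where "\<And>i j. L < \<bar>i - j\<bar> \<Longrightarrow> \<phi> (region m i j) = 0"
proof -
  have "finite {\<bar>i - j\<bar> | i j. region m i j = R}" for R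
  proof (cases "\<exists>i0 j0. region m i0 j0 = R")
    case True
    then obtain i0 j0 where R: "region m i0 j0 = R" by blast
    have "{\<bar>i - j\<bar> | i j. region m i j = R} \<subseteq> {\<bar>i0 - j0\<bar>}"
      unfolding R[symmetric] by (auto dest: region_eq_imp_abs_diff_eq)
    then show ?thesis by (rule finite_subset) simp
  qed simp
  moreover have "{\<bar>i - j\<bar> | i j. \<phi> (region m i j) \<noteq> 0} \<subseteq>
      (\<Union>R \<in> {R \<in> regions m. \<phi> R \<noteq> 0}. {\<bar>i - j\<bar> | i j. region m i j = R})"
    by (auto simp: regions_def)
  ultimately have "finite {\<bar>i - j\<bar> | i j. \<phi> (region m i j) \<noteq> 0}"
    using assms unfolding compact_supp_def by (meson finite_UN_I finite_subset)
  then have "\<bar>i - j\<bar> \<le> Max {\<bar>i - j\<bar> | i j. \<phi> (region m i j) \<noteq> 0}"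
    if "\<phi> (region m i j) \<noteq> 0" for i j
    using that by (intro Max_ge) blast+
  then show thesis
    using that[of "Max {\<bar>i - j\<bar> | i j. \<phi> (region m i j) \<noteq> 0}"] by (meson not_le)
qed

lemma band_imp_compact_supp:
  assumes "2 \<le> m" and band: "\<And>i j. L < \<bar>i - j\<bar> \<Longrightarrow> \<phi> (region m i j) = 0"
  shows "compact_supp m \<phi>"
proof -
  have "{R \<in> regions m. \<phi> R \<noteq> 0} \<subseteq>
      (\<lambda>(i, j). region m i j) ` ({0..<period m} \<times> {- L..period m + L})"
  proof safe
    fix R assume "R \<in> regions m" "\<phi> R \<noteq> 0"
    then obtain i j where R: "R = region m i j"
      by (auto simp: regions_def)
    with band[of i j] \<open>\<phi> R \<noteq> 0\<close> have "\<bar>i - j\<bar> \<le> L"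
      by fastforce
    define q where "q = i div period m"
    have "0 \<le> i - q * period m" "i - q * period m < period m"
      using assms(1) by (simp_all add: q_def period_def minus_div_mult_eq_mod)
    moreover have "R = region m (i - q * period m) (j - q * period m)"
      using region_shift[of m "i - q * period m" q "j - q * period m"] R by simp
    ultimately show "R \<in> (\<lambda>(i, j). region m i j) ` ({0..<period m} \<times> {- L..period m + L})"
      using \<open>\<bar>i - j\<bar> \<le> L\<close> by (intro image_eqI[of _ _ "(i - q * period m, j - q * period m)"]) auto
  qed
  then show ?thesis
    unfolding compact_supp_def by (rule finite_subset) simp
qed

section \<open>Heegaard states of lifted partial permutations\<close>

lemma lifted_pp_dihedral:
  assumes "lifted_pp m k S f" and "h \<in> dihedral_maps m" and "a \<in> S"
  shows "h a \<in> S \<and> f (h a) = h (f a)"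
  using assms unfolding lifted_pp_def Gm_eq_dihedral_maps[symmetric] by blast

lemma lifted_pp_shift:
  assumes "lifted_pp m k S f" and "a \<in> S"
  shows "a + t * period m \<in> S \<and> f (a + t * period m) = f a + t * period m"
  using lifted_pp_dihedral[OF assms(1) _ assms(2), of "shift m t"]
  by (simp add: dihedral_maps_def shift_def)

lemma lifted_pp_flip:
  assumes "lifted_pp m k S f" and "a \<in> S"
  shows "1 + t * period m - a \<in> S \<and> f (1 + t * period m - a) = 1 + t * period m - f a"
  using lifted_pp_dihedral[OF assms(1) _ assms(2), of "flip m t"]
  by (simp add: dihedral_maps_def flip_def)

text \<open>Injectivity needs \<open>m \<ge> 2\<close>: a translation fixing \<open>f s\<close> is trivial, and a reflection
  \<open>x \<mapsto> 1 + t * period m - x\<close> has no integer fixed point because \<open>period m\<close> is even.\<close>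
lemma lifted_pp_inj_on:
  assumes "lifted_pp m k S f" and "2 \<le> m"
  shows "inj_on f S"
proof
  fix s s' assume s: "s \<in> S" "s' \<in> S" "f s = f s'"
  have "\<forall>s\<in>S. \<forall>s'\<in>S. orbitZ m (f s) = orbitZ m (f s') \<longrightarrow> orbitZ m s = orbitZ m s'"
    using assms(1) unfolding lifted_pp_def by (elim conjE) assumption
  then have orbit_eq: "orbitZ m s' = orbitZ m s"
    using s by metis
  have "s' \<in> orbitZ m s'"
    unfolding orbitZ_def by (rule CollectI, rule exI[of _ id]) (simp add: Gm_id)
  then have "s' \<in> orbitZ m s"
    by (simp only: orbit_eq)
  then obtain h where h: "h \<in> dihedral_maps m" "s' = h s"
    unfolding orbitZ_def Gm_eq_dihedral_maps by blast
  have f_s': "f s' = h (f s)"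
    using lifted_pp_dihedral[OF assms(1) h(1) s(1)] h(2) by simp
  from h(1) consider t where "h = shift m t" | t where "h = flip m t"
    unfolding dihedral_maps_def by blast
  then show "s = s'"
  proof cases
    case 1
    with f_s' s(3) have "t * period m = 0" by (simp add: shift_def)
    then show ?thesis
      using assms(2) h(2) 1 by (simp add: shift_def period_def)
  next
    case 2
    with f_s' s(3) have "2 * f s = 1 + 2 * (t * (int m - 1))"
      by (simp add: flip_def period_def algebra_simps)
    then have "(2 * f s) mod 2 = (1 + 2 * (t * (int m - 1))) mod 2"
      by (rule arg_cong)
    then show ?thesis by simp
  qed
qed

lemma map_prod_dihedral_lattice:
  assumes "h \<in> dihedral_maps m"
  obtains h' where "h' \<in> dihedral_maps m" "map_prod h h (lattice x y) = lattice (h' x) (h' y)"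
proof -
  from assms consider t where "h = shift m t" | t where "h = flip m t"
    unfolding dihedral_maps_def by blast
  then show thesis
  proof cases
    case 1
    then show thesis
      using that[of "shift m t"] by (simp add: dihedral_maps_def lattice_def of_int_shift)
  next
    case 2
    then show thesis
      using that[of "flip m t"] by (simp add: dihedral_maps_def lattice_def of_int_flip)
  qed
qed

lemma hstate_mem_iff:
  assumes "lifted_pp m k S f"
  shows "orbitP m (lattice a b) \<in> hstate m S f \<longleftrightarrow> a \<in> S \<and> b = f a"
proof
  assume "orbitP m (lattice a b) \<in> hstate m S f"
  then obtain s where s: "s \<in> S" "orbitP m (lattice a b) = orbitP m (lattice s (f s))"
    unfolding hstate_def by blast
  have "lattice a b \<in> orbitP m (lattice a b)"
    unfolding orbitP_def by (rule CollectI, rule exI[of _ id]) (simp add: PG_id)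
  then have "lattice a b \<in> orbitP m (lattice s (f s))"
    by (simp only: s(2))
  then obtain g where g: "g \<in> PG m" "lattice a b = g (lattice s (f s))"
    unfolding orbitP_def by blast
  obtain h :: "real \<Rightarrow> real" where h: "h \<in> dihedral_maps m" "g = map_prod h h"
    using subsetD[OF PG_subset_dihedral_maps g(1)] by blast
  obtain h' where h': "h' \<in> dihedral_maps m"
    "map_prod h h (lattice s (f s)) = lattice (h' s) (h' (f s))"
    using map_prod_dihedral_lattice[OF h(1)] by blast
  with g(2) h(2) have "a = h' s" "b = h' (f s)"
    by (simp_all add: lattice_def)
  then show "a \<in> S \<and> b = f a"
    using lifted_pp_dihedral[OF assms h'(1) s(1)] by simp
next
  assume "a \<in> S \<and> b = f a"
  then show "orbitP m (lattice a b) \<in> hstate m S f"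
    unfolding hstate_def by blast
qed

section \<open>Two-chains as functions on cells\<close>

text \<open>For \<open>p i j = \<phi> (region m i j)\<close> this is \<open>B + C - A - D\<close> at the lattice point \<open>(a, b)\<close>, in the
  notation of the corner conditions.\<close>

definition mixed_diff :: "(int \<Rightarrow> int \<Rightarrow> int) \<Rightarrow> int \<Rightarrow> int \<Rightarrow> int" where
  "mixed_diff p a b = p (a - 1) b + p a (b - 1) - p a b - p (a - 1) (b - 1)"

lemma Dom_hstate_iff:
  assumes "lifted_pp m k S f" and "lifted_pp m k T g"
  shows "\<phi> \<in> Dom m (hstate m S f) (hstate m T g) \<longleftrightarrow> two_chain m \<phi> \<and>
    (\<forall>a b. mixed_diff (\<lambda>i j. \<phi> (region m i j)) a b
             = of_bool (a \<in> S \<and> b = f a) - of_bool (a \<in> T \<and> b = g a))"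
proof -
  have "(let P = orbitP m (lattice a b) in
          (P \<in> hstate m S f - hstate m T g \<longrightarrow> initial_corner m \<phi> a b) \<and>
          (P \<in> hstate m T g - hstate m S f \<longrightarrow> terminal_corner m \<phi> a b) \<and>
          (P \<notin> hstate m S f - hstate m T g \<and> P \<notin> hstate m T g - hstate m S f
             \<longrightarrow> no_corner m \<phi> a b))
    \<longleftrightarrow> mixed_diff (\<lambda>i j. \<phi> (region m i j)) a b
          = of_bool (a \<in> S \<and> b = f a) - of_bool (a \<in> T \<and> b = g a)" for a b
    unfolding Let_def Diff_iff hstate_mem_iff[OF assms(1)] hstate_mem_iff[OF assms(2)]
      initial_corner_def terminal_corner_def no_corner_def multA_def multB_def multC_def multD_def
      mixed_diff_def of_bool_def
    by auto
  then show ?thesis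
    unfolding Dom_def by auto
qed

lemma nondecreasing_vanishing_eq_0:
  fixes r :: "int \<Rightarrow> int"
  assumes mono: "\<And>x. r (x - 1) \<le> r x" and vanish: "\<And>x. L < \<bar>x\<bar> \<Longrightarrow> r x = 0"
  shows "r x = 0"
proof -
  have le: "r y \<le> r (y + int n)" for y n
  proof (induction n)
    case (Suc n)
    then show ?case using mono[of "y + int (Suc n)"] by simp
  qed simp
  define n where "n = nat (\<bar>L\<bar> + \<bar>x\<bar> + 1)"
  have "r (x - int n) \<le> r x" "r x \<le> r (x + int n)"
    using le[of "x - int n" n] le[of x n] by simp_all
  moreover have "r (x - int n) = 0" "r (x + int n) = 0"
    by (rule vanish, simp add: n_def)+
  ultimately show ?thesis by simp
qed

lemma mixed_diff_as_increment:
  "mixed_diff p a b = (p (a - 1) b - p a b) - (p (a - 1) (b - 1) - p a (b - 1))"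
  "mixed_diff p a b = (p a (b - 1) - p a b) - (p (a - 1) (b - 1) - p (a - 1) b)"
  by (simp_all add: mixed_diff_def)

lemma mixed_diff_graph_imp_subset:
  assumes diff: "\<And>a b. mixed_diff p a b = of_bool (a \<in> S \<and> b = f a) - of_bool (a \<in> T \<and> b = g a)"
    and band: "\<And>i j. L < \<bar>i - j\<bar> \<Longrightarrow> p i j = 0"
  shows "S \<subseteq> T \<and> f ` S \<subseteq> g ` T"
proof (intro conjI subsetI)
  fix a assume "a \<in> S"
  show "a \<in> T"
  proof (rule ccontr)
    assume "a \<notin> T"
    define r where "r b = p (a - 1) b - p a b" for b
    have "r (b - 1) \<le> r b" for b
      using diff[of a b] \<open>a \<notin> T\<close>
      by (simp add: mixed_diff_as_increment(1) r_def of_bool_def split: if_split_asm)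
    moreover have "r b = 0" if "\<bar>a\<bar> + \<bar>L\<bar> + 1 < \<bar>b\<bar>" for b
      using that band[of "a - 1" b] band[of a b] by (simp add: r_def)
    ultimately have "r b = 0" for b
      by (rule nondecreasing_vanishing_eq_0)
    then have "mixed_diff p a (f a) = 0"
      by (simp add: mixed_diff_as_increment(1) flip: r_def)
    then show False
      using diff[of a "f a"] \<open>a \<in> S\<close> \<open>a \<notin> T\<close> by simp
  qed
next
  fix b assume "b \<in> f ` S"
  then obtain a0 where "a0 \<in> S" "b = f a0" by blast
  show "b \<in> g ` T"
  proof (rule ccontr)
    assume "b \<notin> g ` T"
    then have not_g: "\<not> (a \<in> T \<and> b = g a)" for a by blast
    define r where "r a = p a (b - 1) - p a b" for a
    have "r (a - 1) \<le> r a" for a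
      using diff[of a b] not_g[of a]
      by (simp add: mixed_diff_as_increment(2) r_def of_bool_def split: if_split_asm)
    moreover have "r a = 0" if "\<bar>b\<bar> + \<bar>L\<bar> + 1 < \<bar>a\<bar>" for a
      using that band[of a "b - 1"] band[of a b] by (simp add: r_def)
    ultimately have "r a = 0" for a
      by (rule nondecreasing_vanishing_eq_0)
    then have "mixed_diff p a0 b = 0"
      by (simp add: mixed_diff_as_increment(2) flip: r_def)
    then show False
      using diff[of a0 b] \<open>a0 \<in> S\<close> \<open>b = f a0\<close> not_g[of a0] by simp
  qed
qed

lemma mixed_diff_graph_imp_eq:
  assumes "\<And>a b. mixed_diff p a b = of_bool (a \<in> S \<and> b = f a) - of_bool (a \<in> T \<and> b = g a)"
    and "\<And>i j. L < \<bar>i - j\<bar> \<Longrightarrow> p i j = 0"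
  shows "S = T \<and> f ` S = g ` T"
proof -
  have "mixed_diff (\<lambda>i j. - p i j) a b = of_bool (a \<in> T \<and> b = g a) - of_bool (a \<in> S \<and> b = f a)"
    for a b
    using assms(1)[of a b] by (simp add: mixed_diff_def)
  then have "T \<subseteq> S \<and> g ` T \<subseteq> f ` S"
    by (rule mixed_diff_graph_imp_subset) (use assms(2) in simp)
  with mixed_diff_graph_imp_subset[OF assms] show ?thesis by blast
qed

lemma mixed_diff_zero_band_eq_0:
  assumes diff: "\<And>a b. mixed_diff p a b = 0" and band: "\<And>i j. L < \<bar>i - j\<bar> \<Longrightarrow> p i j = 0"
  shows "p i j = 0"
proof -
  have "p (a - 1) b - p a b = 0" for a b
  proof (rule nondecreasing_vanishing_eq_0[where r = "\<lambda>b. p (a - 1) b - p a b"])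
    show "p (a - 1) (b - 1) - p a (b - 1) \<le> p (a - 1) b - p a b" for b
      using diff[of a b] by (simp add: mixed_diff_as_increment(1))
    show "p (a - 1) b - p a b = 0" if "\<bar>a\<bar> + \<bar>L\<bar> + 1 < \<bar>b\<bar>" for b
      using that band[of "a - 1" b] band[of a b] by simp
  qed
  show ?thesis
  proof (rule nondecreasing_vanishing_eq_0[where r = "\<lambda>a. p a j"])
    show "p (a - 1) j \<le> p a j" for a
      using \<open>p (a - 1) j - p a j = 0\<close> by simp
    show "p a j = 0" if "\<bar>j\<bar> + \<bar>L\<bar> < \<bar>a\<bar>" for a
      using that band[of a j] by simp
  qed
qed

lemma two_chain_of_cell_function:
  assumes "\<And>i j i' j'. region m i j = region m i' j' \<Longrightarrow> \<psi> i j = \<psi> i' j'"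
  obtains \<phi> where "two_chain m \<phi>" and "\<And>i j. \<phi> (region m i j) = \<psi> i j"
proof
  define \<phi> where
    "\<phi> R = (if R \<in> regions m then SOME v. \<exists>i j. R = region m i j \<and> v = \<psi> i j else 0)" for R
  show "two_chain m \<phi>"
    by (simp add: two_chain_def \<phi>_def)
  show "\<phi> (region m i j) = \<psi> i j" for i j
  proof -
    have "(SOME v. \<exists>i' j'. region m i j = region m i' j' \<and> v = \<psi> i' j') = \<psi> i j"
    proof (rule someI2)
      show "\<exists>i' j'. region m i j = region m i' j' \<and> \<psi> i j = \<psi> i' j'" by blast
      show "v = \<psi> i j" if "\<exists>i' j'. region m i j = region m i' j' \<and> v = \<psi> i' j'" for v
        using that assms by metis
    qed
    moreover have "region m i j \<in> regions m"
      unfolding regions_def by blast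
    ultimately show ?thesis
      unfolding \<phi>_def by simp
  qed
qed

section \<open>Counting graph points in quadrants\<close>

lemma int_card_remove:
  assumes "finite A"
  shows "int (card A) = int (card (A - {x})) + of_bool (x \<in> A)"
proof (cases "x \<in> A")
  case True
  with assms have "card A = Suc (card (A - {x}))"
    by (rule card.remove)
  with True show ?thesis by simp
qed simp

lemma card_fiber_inj_on:
  assumes "inj_on f S"
  shows "card {a \<in> S. f a = j} = of_bool (j \<in> f ` S)"
proof (cases "j \<in> f ` S")
  case True
  then obtain a0 where "a0 \<in> S" "j = f a0" by blast
  then have "{a \<in> S. f a = j} = {a0}"
    using assms by (auto simp: inj_on_def)
  then show ?thesis using True by simp
next
  case False
  then have "{a \<in> S. f a = j} = {}" by blast
  with False show ?thesis by (simp only: card.empty of_bool_eq(1))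
qed

lemma int_fun_eq_if_step_eq:
  fixes h :: "int \<Rightarrow> 'a"
  assumes "\<And>x. h x = h (x - 1)"
  shows "h x = h y"
proof -
  have "h x = h 0" for x
    by (induction x rule: int_induct[where k = 0]) (use assms in \<open>simp_all, metis add_diff_cancel\<close>)
  from this[of x] this[of y] show ?thesis by simp
qed

definition nw_count :: "int set \<Rightarrow> (int \<Rightarrow> int) \<Rightarrow> int \<Rightarrow> int \<Rightarrow> int" where
  "nw_count S f i j = int (card {a \<in> S. a \<le> i \<and> j < f a})"

definition se_count :: "int set \<Rightarrow> (int \<Rightarrow> int) \<Rightarrow> int \<Rightarrow> int \<Rightarrow> int" where
  "se_count S f i j = int (card {a \<in> S. i < a \<and> f a \<le> j})"

context
  fixes S :: "int set" and f :: "int \<Rightarrow> int" and K :: int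
  assumes bounded: "\<forall>a\<in>S. \<bar>f a - a\<bar> \<le> K"
begin

lemma finite_nw_set: "finite {a \<in> S. a \<le> i \<and> j < f a}"
  by (rule finite_subset[of _ "{j - K..i}"]) (use bounded in force)+

lemma finite_se_set: "finite {a \<in> S. i < a \<and> f a \<le> j}"
  by (rule finite_subset[of _ "{i..j + K}"]) (use bounded in force)+

lemma nw_count_eq_0:
  assumes "K \<le> j - i"
  shows "nw_count S f i j = 0"
proof -
  have empty: "{a \<in> S. a \<le> i \<and> j < f a} = {}"
    using assms bounded by force
  show ?thesis unfolding nw_count_def empty by simp
qed

lemma se_count_eq_0:
  assumes "K \<le> i - j"
  shows "se_count S f i j = 0"
proof -
  have empty: "{a \<in> S. i < a \<and> f a \<le> j} = {}"
    using assms bounded by force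
  show ?thesis unfolding se_count_def empty by simp
qed

lemma nw_count_step: "nw_count S f i j = nw_count S f (i - 1) j + of_bool (i \<in> S \<and> j < f i)"
proof -
  have "{a \<in> S. a \<le> i \<and> j < f a} - {i} = {a \<in> S. a \<le> i - 1 \<and> j < f a}"
    by auto
  then show ?thesis
    unfolding nw_count_def using int_card_remove[OF finite_nw_set, of i j i] by simp
qed

lemma se_count_step: "se_count S f (i - 1) j = se_count S f i j + of_bool (i \<in> S \<and> f i \<le> j)"
proof -
  have "{a \<in> S. i - 1 < a \<and> f a \<le> j} - {i} = {a \<in> S. i < a \<and> f a \<le> j}"
    by auto
  then show ?thesis
    unfolding se_count_def using int_card_remove[OF finite_se_set, of "i - 1" j i] by simp
qed

lemma mixed_diff_nw_count: "mixed_diff (nw_count S f) a b = of_bool (a \<in> S \<and> b = f a)"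
  unfolding mixed_diff_def nw_count_step[of a b] nw_count_step[of a "b - 1"]
  by auto

lemma nw_se_diff_step_i:
  shows "(nw_count S f i j - se_count S f i j) - (nw_count S f (i - 1) j - se_count S f (i - 1) j)
           = of_bool (i \<in> S)"
  using nw_count_step[of i j] se_count_step[of i j] by auto

lemma nw_se_diff_step_j:
  shows "(nw_count S f i j - se_count S f i j) - (nw_count S f i (j - 1) - se_count S f i (j - 1))
           = - int (card {a \<in> S. f a = j})"
proof -
  have fin_le: "finite {a \<in> S. a \<le> i \<and> f a = j}" and fin_gt: "finite {a \<in> S. i < a \<and> f a = j}"
    using finite_nw_set[of i "j - 1"] finite_se_set[of i j]
    by (auto elim: finite_subset[rotated])
  have "{a \<in> S. a \<le> i \<and> j - 1 < f a}
          = {a \<in> S. a \<le> i \<and> j < f a} \<union> {a \<in> S. a \<le> i \<and> f a = j}"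
    "{a \<in> S. i < a \<and> f a \<le> j}
          = {a \<in> S. i < a \<and> f a \<le> j - 1} \<union> {a \<in> S. i < a \<and> f a = j}"
    "{a \<in> S. f a = j} = {a \<in> S. a \<le> i \<and> f a = j} \<union> {a \<in> S. i < a \<and> f a = j}"
    by auto
  moreover have "card ({a \<in> S. a \<le> i \<and> j < f a} \<union> {a \<in> S. a \<le> i \<and> f a = j})
      = card {a \<in> S. a \<le> i \<and> j < f a} + card {a \<in> S. a \<le> i \<and> f a = j}"
    by (intro card_Un_disjoint finite_nw_set fin_le) auto
  moreover have "card ({a \<in> S. i < a \<and> f a \<le> j - 1} \<union> {a \<in> S. i < a \<and> f a = j})
      = card {a \<in> S. i < a \<and> f a \<le> j - 1} + card {a \<in> S. i < a \<and> f a = j}"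
    by (intro card_Un_disjoint finite_se_set fin_gt) auto
  moreover have "card ({a \<in> S. a \<le> i \<and> f a = j} \<union> {a \<in> S. i < a \<and> f a = j})
      = card {a \<in> S. a \<le> i \<and> f a = j} + card {a \<in> S. i < a \<and> f a = j}"
    using fin_le fin_gt by (intro card_Un_disjoint) auto
  ultimately show ?thesis
    unfolding nw_count_def se_count_def by simp
qed

end

lemma nw_count_translate:
  fixes S :: "int set" and f :: "int \<Rightarrow> int"
  assumes mem: "\<And>a. a + c \<in> S \<longleftrightarrow> a \<in> S"
    and equiv: "\<And>a. a \<in> S \<Longrightarrow> f (a + c) = f a + c"
  shows "nw_count S f (i + c) (j + c) = nw_count S f i j"
proof -
  have "a - c \<in> S" "f (a - c) = f a - c" if "a \<in> S" for a
    using that mem[of "a - c"] equiv[of "a - c"] by simp_all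
  then have "bij_betw (\<lambda>a. a + c) {a \<in> S. a \<le> i \<and> j < f a} {a \<in> S. a \<le> i + c \<and> j + c < f a}"
    by (intro bij_betw_byWitness[where f' = "\<lambda>a. a - c"]) (auto simp: mem equiv)
  then show ?thesis
    unfolding nw_count_def by (simp add: bij_betw_same_card)
qed

lemma nw_count_reflect:
  fixes S :: "int set" and f :: "int \<Rightarrow> int"
  assumes "\<And>a. a \<in> S \<Longrightarrow> 1 + c - a \<in> S \<and> f (1 + c - a) = 1 + c - f a"
  shows "nw_count S f (c - i) (c - j) = se_count S f i j"
proof -
  have "bij_betw (\<lambda>a. 1 + c - a) {a \<in> S. i < a \<and> f a \<le> j} {a \<in> S. a \<le> c - i \<and> c - j < f a}"
    by (intro bij_betw_byWitness[where f' = "\<lambda>a. 1 + c - a"]) (use assms in force)+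
  then show ?thesis
    unfolding nw_count_def se_count_def by (simp add: bij_betw_same_card)
qed

lemma bounded_displacement_if_periodic:
  fixes S :: "int set" and f :: "int \<Rightarrow> int"
  assumes "0 < c" and periodic: "\<And>a t. a \<in> S \<Longrightarrow> a + t * c \<in> S \<and> f (a + t * c) = f a + t * c"
  shows "\<exists>K. \<forall>a\<in>S. \<bar>f a - a\<bar> \<le> K"
proof -
  define K where "K = Max ((\<lambda>a. \<bar>f a - a\<bar>) ` {a \<in> S. 0 \<le> a \<and> a < c})"
  have fin: "finite {a \<in> S. 0 \<le> a \<and> a < c}"
    by (rule finite_subset[of _ "{0..<c}"]) auto
  have "\<bar>f a - a\<bar> \<le> K" if "a \<in> S" for a
  proof -
    define r where "r = a mod c"
    have a: "a = r + (a div c) * c" and r: "r = a + (- (a div c)) * c"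
      by (simp_all add: r_def mod_div_mult_eq minus_div_mult_eq_mod[symmetric])
    have "r \<in> S" using periodic[OF that, of "- (a div c)"] r by simp
    moreover have "0 \<le> r" "r < c" using \<open>0 < c\<close> by (simp_all add: r_def)
    ultimately have "\<bar>f r - r\<bar> \<le> K"
      unfolding K_def using fin by (intro Max_ge) auto
    moreover have "f a = f r + (a div c) * c"
      using a periodic[OF \<open>r \<in> S\<close>, of "a div c"] by simp
    ultimately show ?thesis using a by simp
  qed
  then show ?thesis by blast
qed

lemma nw_se_diff_eq_if_same_image:
  fixes S :: "int set" and f g :: "int \<Rightarrow> int"
  assumes bf: "\<forall>a\<in>S. \<bar>f a - a\<bar> \<le> K" and bg: "\<forall>a\<in>S. \<bar>g a - a\<bar> \<le> K"
    and "inj_on f S" and "inj_on g S" and "f ` S = g ` S"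
  shows "(nw_count S f i j - se_count S f i j) - (nw_count S g i j - se_count S g i j)
       = (nw_count S f 0 0 - se_count S f 0 0) - (nw_count S g 0 0 - se_count S g 0 0)"
proof -
  define E where "E i j = (nw_count S f i j - se_count S f i j) - (nw_count S g i j - se_count S g i j)"
    for i j
  have "E i j = E (i - 1) j" for i j
    using nw_se_diff_step_i[OF bf, of i j] nw_se_diff_step_i[OF bg, of i j] by (simp add: E_def)
  then have "E i j = E 0 j"
    by (rule int_fun_eq_if_step_eq[where h = "\<lambda>i. E i j"])
  moreover have "E 0 j = E 0 (j - 1)" for j
    using nw_se_diff_step_j[OF bf, of 0 j] nw_se_diff_step_j[OF bg, of 0 j] assms(3-5)
    by (simp add: E_def card_fiber_inj_on)
  then have "E 0 j = E 0 0"
    by (rule int_fun_eq_if_step_eq[where h = "E 0"])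
  ultimately show ?thesis by (simp add: E_def)
qed

section \<open>Existence and uniqueness\<close>

lemma lifted_pp_bounded_displacement:
  assumes "lifted_pp m k S f" and "2 \<le> m"
  shows "\<exists>K. \<forall>a\<in>S. \<bar>f a - a\<bar> \<le> K"
  using assms(2) lifted_pp_shift[OF assms(1)]
  by (intro bounded_displacement_if_periodic[of "period m"]) (simp_all add: period_def)

lemma lifted_pp_nw_count_0_0: "lifted_pp m k S f \<Longrightarrow> nw_count S f 0 0 = se_count S f 0 0"
  using nw_count_reflect[of S 0 f 0 0] lifted_pp_flip[of m k S f _ 0] by simp

lemma lifted_pp_nw_diff_eq_se_diff:
  assumes lp_f: "lifted_pp m k S f" and lp_g: "lifted_pp m k S g"
    and image: "f ` S = g ` S" and m: "2 \<le> m"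
  shows "nw_count S f i j - nw_count S g i j = se_count S f i j - se_count S g i j"
proof -
  obtain Kf Kg where "\<forall>a\<in>S. \<bar>f a - a\<bar> \<le> Kf" "\<forall>a\<in>S. \<bar>g a - a\<bar> \<le> Kg"
    using lifted_pp_bounded_displacement[OF lp_f m] lifted_pp_bounded_displacement[OF lp_g m] by blast
  then have "\<forall>a\<in>S. \<bar>f a - a\<bar> \<le> max Kf Kg" "\<forall>a\<in>S. \<bar>g a - a\<bar> \<le> max Kf Kg"
    by fastforce+
  from nw_se_diff_eq_if_same_image[OF this lifted_pp_inj_on[OF lp_f m] lifted_pp_inj_on[OF lp_g m] image,
      where i = i and j = j]
  show ?thesis
    using lifted_pp_nw_count_0_0[OF lp_f] lifted_pp_nw_count_0_0[OF lp_g] by linarith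
qed

lemma lifted_pp_nw_diff_region_invariant:
  assumes lp_f: "lifted_pp m k S f" and lp_g: "lifted_pp m k S g"
    and image: "f ` S = g ` S" and m: "2 \<le> m"
    and "region m i j = region m i' j'"
  shows "nw_count S f i j - nw_count S g i j = nw_count S f i' j' - nw_count S g i' j'"
  using region_eq_imp_cells_related[OF assms(5)]
proof (elim disjE exE conjE)
  fix t assume "i' = i + t * period m" "j' = j + t * period m"
  moreover have "a + t * period m \<in> S \<longleftrightarrow> a \<in> S" for a
    using lifted_pp_shift[OF lp_f, of a t] lifted_pp_shift[OF lp_f, of "a + t * period m" "- t"] by auto
  ultimately show ?thesis
    using lifted_pp_shift[OF lp_f] lifted_pp_shift[OF lp_g] by (simp add: nw_count_translate)
next
  fix t assume "i' = t * period m - i" "j' = t * period m - j"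
  then show ?thesis
    using lifted_pp_nw_diff_eq_se_diff[OF assms(1-4), of i j]
      nw_count_reflect[OF lifted_pp_flip[OF lp_f]] nw_count_reflect[OF lifted_pp_flip[OF lp_g]]
    by simp
qed

lemma exists_compact_two_chain:
  assumes lp_f: "lifted_pp m k S f" and lp_g: "lifted_pp m k S g"
    and image: "f ` S = g ` S" and m: "2 \<le> m"
  shows "\<exists>\<phi>. two_chain m \<phi> \<and> compact_supp m \<phi> \<and>
    (\<forall>a b. mixed_diff (\<lambda>i j. \<phi> (region m i j)) a b
             = of_bool (a \<in> S \<and> b = f a) - of_bool (a \<in> S \<and> b = g a))"
proof -
  obtain \<phi> where \<phi>: "two_chain m \<phi>" "\<And>i j. \<phi> (region m i j) = nw_count S f i j - nw_count S g i j"
    using two_chain_of_cell_function[of m "\<lambda>i j. nw_count S f i j - nw_count S g i j",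
        OF lifted_pp_nw_diff_region_invariant[OF assms]] by blast
  obtain Kf Kg where bf: "\<forall>a\<in>S. \<bar>f a - a\<bar> \<le> Kf" and bg: "\<forall>a\<in>S. \<bar>g a - a\<bar> \<le> Kg"
    using lifted_pp_bounded_displacement[OF lp_f m] lifted_pp_bounded_displacement[OF lp_g m] by blast
  have "\<phi> (region m i j) = 0" if "max Kf Kg < \<bar>i - j\<bar>" for i j
  proof (cases "i < j")
    case True
    with that show ?thesis
      using nw_count_eq_0[OF bf, where i = i and j = j] nw_count_eq_0[OF bg, where i = i and j = j] by (simp add: \<phi>(2))
  next
    case False
    with that show ?thesis
      using se_count_eq_0[OF bf, where i = i and j = j] se_count_eq_0[OF bg, where i = i and j = j]
        lifted_pp_nw_diff_eq_se_diff[OF assms, of i j] by (simp add: \<phi>(2))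
  qed
  then have "compact_supp m \<phi>"
    by (rule band_imp_compact_supp[OF m])
  moreover have "mixed_diff (\<lambda>i j. \<phi> (region m i j)) a b
      = of_bool (a \<in> S \<and> b = f a) - of_bool (a \<in> S \<and> b = g a)" for a b
    using mixed_diff_nw_count[OF bf, of a b] mixed_diff_nw_count[OF bg, of a b]
    by (simp add: \<phi>(2) mixed_diff_def)
  ultimately show ?thesis using \<phi>(1) by blast
qed

lemma compact_two_chain_eq_if_mixed_diff_eq:
  assumes "two_chain m \<phi>" "compact_supp m \<phi>" "two_chain m \<psi>" "compact_supp m \<psi>"
    and diff: "\<And>a b. mixed_diff (\<lambda>i j. \<phi> (region m i j)) a b
                       = mixed_diff (\<lambda>i j. \<psi> (region m i j)) a b"
  shows "\<phi> = \<psi>"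
proof
  fix R
  obtain L1 where L1: "\<And>i j. L1 < \<bar>i - j\<bar> \<Longrightarrow> \<phi> (region m i j) = 0"
    using compact_supp_imp_band[OF assms(2)] by blast
  obtain L2 where L2: "\<And>i j. L2 < \<bar>i - j\<bar> \<Longrightarrow> \<psi> (region m i j) = 0"
    using compact_supp_imp_band[OF assms(4)] by blast
  have cells: "\<phi> (region m i j) - \<psi> (region m i j) = 0" for i j
  proof (rule mixed_diff_zero_band_eq_0[where p = "\<lambda>i j. \<phi> (region m i j) - \<psi> (region m i j)"
        and L = "max L1 L2"])
    show "mixed_diff (\<lambda>i j. \<phi> (region m i j) - \<psi> (region m i j)) a b = 0" for a b
      using diff[of a b] by (simp add: mixed_diff_def)
    show "\<phi> (region m i j) - \<psi> (region m i j) = 0" if "max L1 L2 < \<bar>i - j\<bar>" for i j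
      using that L1[of i j] L2[of i j] by simp
  qed
  show "\<phi> R = \<psi> R"
  proof (cases "R \<in> regions m")
    case True
    then show ?thesis using cells by (auto simp: regions_def)
  next
    case False
    then show ?thesis using assms(1,3) by (simp add: two_chain_def)
  qed
qed

theorem mainTheorem4:
  fixes m k :: nat and S T :: "int set" and f g :: "int \<Rightarrow> int"
  assumes "0 < k" and "k < m"
    and "lifted_pp m k S f" and "lifted_pp m k T g"
  shows "((\<exists>\<phi>. \<phi> \<in> Dom m (hstate m S f) (hstate m T g) \<and> compact_supp m \<phi>)
            \<longleftrightarrow> (S = T \<and> f ` S = g ` T))
       \<and> (\<forall>\<phi> \<psi>. \<phi> \<in> Dom m (hstate m S f) (hstate m T g) \<and> compact_supp m \<phi> \<and>
                 \<psi> \<in> Dom m (hstate m S f) (hstate m T g) \<and> compact_supp m \<psi> \<longrightarrow> \<phi> = \<psi>)"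
proof -
  have m: "2 \<le> m" using assms(1,2) by linarith
  note Dom_iff = Dom_hstate_iff[OF assms(3,4)]
  have "S = T \<and> f ` S = g ` T"
    if \<phi>: "\<phi> \<in> Dom m (hstate m S f) (hstate m T g)" "compact_supp m \<phi>" for \<phi>
  proof -
    obtain L where "\<And>i j. L < \<bar>i - j\<bar> \<Longrightarrow> \<phi> (region m i j) = 0"
      using compact_supp_imp_band[OF \<phi>(2)] by blast
    with \<phi>(1) show ?thesis
      unfolding Dom_iff by (intro mixed_diff_graph_imp_eq[where p = "\<lambda>i j. \<phi> (region m i j)"]) auto
  qed
  moreover have "\<exists>\<phi>. \<phi> \<in> Dom m (hstate m S f) (hstate m T g) \<and> compact_supp m \<phi>"
    if "S = T" and "f ` S = g ` T"
    using exists_compact_two_chain[OF assms(3), of g] assms(4) m that unfolding Dom_iff by auto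
  moreover have "\<phi> = \<psi>"
    if "\<phi> \<in> Dom m (hstate m S f) (hstate m T g)" "compact_supp m \<phi>"
      and "\<psi> \<in> Dom m (hstate m S f) (hstate m T g)" "compact_supp m \<psi>" for \<phi> \<psi>
    using that unfolding Dom_iff by (intro compact_two_chain_eq_if_mixed_diff_eq) auto
  ultimately show ?thesis by blast
qed

end
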